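(* Let $X$ be a complex Banach space, $\mathcal{F}$ an algebra with unit, $\Phi:\mathcal{F}\to\mathcal{C}(X)$ a proto-calculus, $\mathcal{B}:=\{b\in\mathcal{F}:\Phi(b)\in\mathcal{L}(X)\}$, and let $(\mathcal{F}',\Phi')$ be the dual calculus associated with $\Phi$. Let $f\in\mathcal{F}'$ and $$D_f:=\mathrm{span}\{\Phi(e)x: x\in X,\ e\in\mathcal{B},\ fe\in\mathcal{B}\}.$$ Then: (a) $D_f$ is dense in $X$ and $D_f\subseteq\mathrm{dom}(\Phi(f))$; in particular $\Phi(f)$ is densely defined. (b) $\Phi(f)'\subseteq\Phi'(f)$, with equality if and only if $D_f$ is a core for $\Phi(f)$. (c) $\Phi(f)$ is bounded if and only if $\Phi'(f)$ is bounded; in this case $\Phi'(f)=\Phi(f)'$.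
   Context: $\mathcal{F}$ need not be commutative. $\mathcal{L}(X)$, $\mathcal{C}(X)$: bounded, resp. closed linear operators; operator inclusions are graph inclusions, sums/products have natural domains, "$Tx=y$" means $x\in\mathrm{dom}(T)$, $Tx=y$; $T'$ denotes the Banach space adjoint of an operator $T$ on $X$ (acting on the dual space $X'$). A proto-calculus is a map $\Phi:\mathcal{F}\to\mathcal{C}(X)$ with (FC1) $\Phi(\mathbf{1})=I$; (FC2) $\lambda\Phi(f)\subseteq\Phi(\lambda f)$, $\Phi(f)+\Phi(g)\subseteq\Phi(f+g)$; (FC3) $\Phi(f)\Phi(g)\subseteq\Phi(fg)$, $\mathrm{dom}(\Phi(f)\Phi(g))=\mathrm{dom}(\Phi(g))\cap\mathrm{dom}(\Phi(fg))$. Dual calculus: $\mathcal{B}$ is a unital subalgebra and $b\mapsto\Phi(b)'$ is a homomorphism from $\mathcal{B}$ with the opposite multiplication $f\cdot_{\mathrm{op}}g=gf$ into $\mathcal{L}(X')$. Let $\mathcal{F}'$ be the set of $f\in\mathcal{F}$ such that for every $d\in\mathcal{B}$ one has $\bigcap\{\ker\Phi(e)': e\in\mathcal{B},\ fde\in\mathcal{B}\}=\{0\}$ (with this set of $e$ nonempty). For $f\in\mathcal{F}'$ the operator $\Phi'(f)$ on $X'$ is defined by: $\Phi'(f)x'=y'$ iff $\Phi(fe)'x'=\Phi(e)'y'$ for all $e\in\mathcal{B}$ with $fe\in\mathcal{B}$. (This $\Phi'$ is a calculus on $\mathcal{F}'$ with the opposite multiplication and extends $b\mapsto\Phi(b)'$.)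 A subspace $D\subseteq\mathrm{dom}(T)$ is a core for a closed operator $T$ if the closure of $T|_D$ is $T$. *)

theory Defs
  imports "HOL-Analysis.Analysis"
begin

section \<open>Complex Banach spaces, encoded as real Banach spaces with a compatible complex scalar multiplication\<close>

definition cbanach :: "(complex \<Rightarrow> 'x::banach \<Rightarrow> 'x) \<Rightarrow> bool" where
  "cbanach sc \<longleftrightarrow> vector_space sc
     \<and> (\<forall>r x. sc (complex_of_real r) x = r *\<^sub>R x)
     \<and> (\<forall>c x. norm (sc c x) = cmod c * norm x)"

definition cspan :: "(complex \<Rightarrow> 'x::banach \<Rightarrow> 'x) \<Rightarrow> 'x set \<Rightarrow> 'x set" where
  "cspan sc S = module.span sc S"

definition cdual :: "(complex \<Rightarrow> 'x::banach \<Rightarrow> 'x) \<Rightarrow> ('x \<Rightarrow> complex) set" where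
  "cdual sc = {\<phi>. Vector_Spaces.linear sc (*) \<phi> \<and> (\<exists>K. \<forall>x. cmod (\<phi> x) \<le> K * norm x)}"

definition dnorm :: "('x::banach \<Rightarrow> complex) \<Rightarrow> real" where
  "dnorm \<phi> = Sup {cmod (\<phi> x) | x. norm x \<le> 1}"

section \<open>Operators on X as graphs\<close>

definition lin_rel :: "(complex \<Rightarrow> 'x::banach \<Rightarrow> 'x) \<Rightarrow> ('x \<times> 'x) set \<Rightarrow> bool" where
  "lin_rel sc T \<longleftrightarrow> (0, 0) \<in> T
     \<and> (\<forall>x y u v. (x, y) \<in> T \<longrightarrow> (u, v) \<in> T \<longrightarrow> (x + u, y + v) \<in> T)
     \<and> (\<forall>c x y. (x, y) \<in> T \<longrightarrow> (sc c x, sc c y) \<in> T)"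

definition closed_op :: "(complex \<Rightarrow> 'x::banach \<Rightarrow> 'x) \<Rightarrow> ('x \<times> 'x) set \<Rightarrow> bool" where
  "closed_op sc T \<longleftrightarrow> lin_rel sc T \<and> (\<forall>y. (0, y) \<in> T \<longrightarrow> y = 0) \<and> closed T"

definition bounded_op :: "(complex \<Rightarrow> 'x::banach \<Rightarrow> 'x) \<Rightarrow> ('x \<times> 'x) set \<Rightarrow> bool" where
  "bounded_op sc T \<longleftrightarrow> closed_op sc T \<and> Domain T = UNIV
     \<and> (\<exists>K. \<forall>x y. (x, y) \<in> T \<longrightarrow> norm y \<le> K * norm x)"

definition op_smul :: "(complex \<Rightarrow> 'x \<Rightarrow> 'x) \<Rightarrow> complex \<Rightarrow> ('x \<times> 'x) set \<Rightarrow> ('x \<times> 'x) set" where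
  "op_smul sc c T = {(x, sc c y) | x y. (x, y) \<in> T}"

definition op_add :: "('x \<times> 'x::plus) set \<Rightarrow> ('x \<times> 'x) set \<Rightarrow> ('x \<times> 'x) set" where
  "op_add T S = {(x, y + z) | x y z. (x, y) \<in> T \<and> (x, z) \<in> S}"

text \<open>Operator product \<open>T S\<close> (first S, then T), with natural domain.\<close>
definition op_mult :: "('x \<times> 'x) set \<Rightarrow> ('x \<times> 'x) set \<Rightarrow> ('x \<times> 'x) set" where
  "op_mult T S = S O T"

definition adj :: "(complex \<Rightarrow> 'x::banach \<Rightarrow> 'x) \<Rightarrow> ('x \<times> 'x) set
    \<Rightarrow> (('x \<Rightarrow> complex) \<times> ('x \<Rightarrow> complex)) set" where
  "adj sc T = {(x', y'). x' \<in> cdual sc \<and> y' \<in> cdual sc \<and> (\<forall>x y. (x, y) \<in> T \<longrightarrow> x' y = y' x)}"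

definition dual_smul :: "complex \<Rightarrow> (('x \<Rightarrow> complex) \<times> ('x \<Rightarrow> complex)) set
    \<Rightarrow> (('x \<Rightarrow> complex) \<times> ('x \<Rightarrow> complex)) set" where
  "dual_smul c S = {(x', (\<lambda>x. c * y' x)) | x' y'. (x', y') \<in> S}"

definition dual_add :: "(('x \<Rightarrow> complex) \<times> ('x \<Rightarrow> complex)) set
    \<Rightarrow> (('x \<Rightarrow> complex) \<times> ('x \<Rightarrow> complex)) set \<Rightarrow> (('x \<Rightarrow> complex) \<times> ('x \<Rightarrow> complex)) set" where
  "dual_add S R = {(x', (\<lambda>x. y' x + z' x)) | x' y' z'. (x', y') \<in> S \<and> (x', z') \<in> R}"

definition bounded_dop :: "(complex \<Rightarrow> 'x::banach \<Rightarrow> 'x)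
    \<Rightarrow> (('x \<Rightarrow> complex) \<times> ('x \<Rightarrow> complex)) set \<Rightarrow> bool" where
  "bounded_dop sc S \<longleftrightarrow> S \<subseteq> cdual sc \<times> cdual sc \<and> Domain S = cdual sc
     \<and> (\<forall>x' y' u' v'. (x', y') \<in> S \<longrightarrow> (u', v') \<in> S \<longrightarrow> ((\<lambda>x. x' x + u' x), (\<lambda>x. y' x + v' x)) \<in> S)
     \<and> (\<forall>c x' y'. (x', y') \<in> S \<longrightarrow> ((\<lambda>x. c * x' x), (\<lambda>x. c * y' x)) \<in> S)
     \<and> (\<forall>y'. ((\<lambda>_. 0), y') \<in> S \<longrightarrow> y' = (\<lambda>_. 0))
     \<and> (\<exists>K. \<forall>x' y'. (x', y') \<in> S \<longrightarrow> dnorm y' \<le> K * dnorm x')"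

text \<open>A unital complex algebra (not necessarily commutative): a \<open>ring_1\<close> with a compatible complex scalar multiplication.\<close>
definition calgebra :: "(complex \<Rightarrow> 'f::ring_1 \<Rightarrow> 'f) \<Rightarrow> bool" where
  "calgebra smF \<longleftrightarrow> vector_space smF
     \<and> (\<forall>c a b. smF c (a * b) = smF c a * b \<and> smF c (a * b) = a * smF c b)"

definition proto_calculus :: "(complex \<Rightarrow> 'x::banach \<Rightarrow> 'x) \<Rightarrow> (complex \<Rightarrow> 'f::ring_1 \<Rightarrow> 'f)
    \<Rightarrow> ('f \<Rightarrow> ('x \<times> 'x) set) \<Rightarrow> bool" where
  "proto_calculus sc smF \<Phi> \<longleftrightarrow> (\<forall>f. closed_op sc (\<Phi> f))
     \<and> \<Phi> 1 = Id
     \<and> (\<forall>c f. op_smul sc c (\<Phi> f) \<subseteq> \<Phi> (smF c f))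
     \<and> (\<forall>f g. op_add (\<Phi> f) (\<Phi> g) \<subseteq> \<Phi> (f + g))
     \<and> (\<forall>f g. op_mult (\<Phi> f) (\<Phi> g) \<subseteq> \<Phi> (f * g)
            \<and> Domain (op_mult (\<Phi> f) (\<Phi> g)) = Domain (\<Phi> g) \<inter> Domain (\<Phi> (f * g)))"

definition bdd_set :: "(complex \<Rightarrow> 'x::banach \<Rightarrow> 'x) \<Rightarrow> ('f \<Rightarrow> ('x \<times> 'x) set) \<Rightarrow> 'f set" where
  "bdd_set sc \<Phi> = {b. bounded_op sc (\<Phi> b)}"

text \<open>Hypotheses of a dual calculus: \<open>\<B>\<close> is a unital subalgebra and \<open>b \<mapsto> \<Phi>(b)'\<close> is a
  homomorphism from \<open>\<B>\<close> with opposite multiplication into \<open>\<L>(X')\<close>.\<close>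
definition dual_calculus :: "(complex \<Rightarrow> 'x::banach \<Rightarrow> 'x) \<Rightarrow> (complex \<Rightarrow> 'f::ring_1 \<Rightarrow> 'f)
    \<Rightarrow> ('f \<Rightarrow> ('x \<times> 'x) set) \<Rightarrow> bool" where
  "dual_calculus sc smF \<Phi> \<longleftrightarrow>
     (let B = bdd_set sc \<Phi> in
        1 \<in> B \<and> (\<forall>a\<in>B. \<forall>b\<in>B. a + b \<in> B \<and> a * b \<in> B) \<and> (\<forall>c. \<forall>a\<in>B. smF c a \<in> B)
      \<and> (\<forall>b\<in>B. bounded_dop sc (adj sc (\<Phi> b)))
      \<and> adj sc (\<Phi> 1) = Id_on (cdual sc)
      \<and> (\<forall>a\<in>B. \<forall>b\<in>B. adj sc (\<Phi> (a + b)) = dual_add (adj sc (\<Phi> a)) (adj sc (\<Phi> b)))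
      \<and> (\<forall>c. \<forall>a\<in>B. adj sc (\<Phi> (smF c a)) = dual_smul c (adj sc (\<Phi> a)))
      \<and> (\<forall>a\<in>B. \<forall>b\<in>B. adj sc (\<Phi> (b * a)) = op_mult (adj sc (\<Phi> a)) (adj sc (\<Phi> b))))"

definition dual_dom :: "(complex \<Rightarrow> 'x::banach \<Rightarrow> 'x) \<Rightarrow> ('f::ring_1 \<Rightarrow> ('x \<times> 'x) set) \<Rightarrow> 'f set" where
  "dual_dom sc \<Phi> = {f. \<forall>d \<in> bdd_set sc \<Phi>.
      {e \<in> bdd_set sc \<Phi>. f * d * e \<in> bdd_set sc \<Phi>} \<noteq> {}
    \<and> (\<forall>x' \<in> cdual sc. (\<forall>e \<in> bdd_set sc \<Phi>. f * d * e \<in> bdd_set sc \<Phi> \<longrightarrow> (x', (\<lambda>_. 0)) \<in> adj sc (\<Phi> e))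
          \<longrightarrow> x' = (\<lambda>_. 0))}"

definition dual_op :: "(complex \<Rightarrow> 'x::banach \<Rightarrow> 'x) \<Rightarrow> ('f::ring_1 \<Rightarrow> ('x \<times> 'x) set) \<Rightarrow> 'f
    \<Rightarrow> (('x \<Rightarrow> complex) \<times> ('x \<Rightarrow> complex)) set" where
  "dual_op sc \<Phi> f = {(x', y'). x' \<in> cdual sc \<and> y' \<in> cdual sc \<and>
     (\<forall>e \<in> bdd_set sc \<Phi>. f * e \<in> bdd_set sc \<Phi> \<longrightarrow>
        (\<exists>z. (x', z) \<in> adj sc (\<Phi> (f * e)) \<and> (y', z) \<in> adj sc (\<Phi> e)))}"

definition Dset :: "(complex \<Rightarrow> 'x::banach \<Rightarrow> 'x) \<Rightarrow> ('f::ring_1 \<Rightarrow> ('x \<times> 'x) set) \<Rightarrow> 'f \<Rightarrow> 'x set" where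
  "Dset sc \<Phi> f = cspan sc {y. \<exists>x e. e \<in> bdd_set sc \<Phi> \<and> f * e \<in> bdd_set sc \<Phi> \<and> (x, y) \<in> \<Phi> e}"

definition is_core :: "'x::banach set \<Rightarrow> ('x \<times> 'x) set \<Rightarrow> bool" where
  "is_core D T \<longleftrightarrow> D \<subseteq> Domain T \<and> closure (T \<inter> (D \<times> UNIV)) = T"

end

theory Submission
  imports Defs
begin

(* For e, fe \<in> B the operators \<Phi>(e), \<Phi>(fe) are bounded and \<Phi>(f)\<Phi>(e) \<subseteq> \<Phi>(fe), so \<Phi>(f)
   maps \<Phi>(e)x to \<Phi>(fe)x. Hence D_f lies in the domain of \<Phi>(f), and \<Phi>'(f) is exactly the
   Banach space adjoint of the restriction \<Phi>(f)|D_f; since restricting an operator can only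
   enlarge its adjoint, \<Phi>(f)' \<subseteq> \<Phi>'(f). Everything else is Hahn-Banach applied to a closed
   operator T and a subspace D of its domain. A functional annihilating D_f satisfies
   (x', 0) \<in> \<Phi>(e)' whenever fe \<in> B, which the definition of F' (with d = 1) forbids, so D_f is
   dense. Separating points from the closure of the graph of T|D in X \<times> X shows that
   (T|D)' = T' iff that graph is dense in the graph of T. Finally, if (T|D)' is bounded then
   norming functionals bound T on D, and a closed operator bounded on a dense subspace of its
   domain is bounded. *)

section \<open>Hahn-Banach and other facts on real normed spaces\<close>

definition dominated_graph :: "real \<Rightarrow> ('a::real_normed_vector \<times> real) set \<Rightarrow> bool" where
  "dominated_graph C H \<longleftrightarrow> subspace H \<and> (\<forall>(x, a) \<in> H. a \<le> C * norm x)"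

lemma dominated_graph_single_valued:
  assumes "dominated_graph C H" "(x, a) \<in> H" "(x, b) \<in> H"
  shows "a = b"
proof -
  have H: "subspace H" and bound: "\<And>x a. (x, a) \<in> H \<Longrightarrow> a \<le> C * norm x"
    using assms(1) unfolding dominated_graph_def by auto
  have "(0, a - b) \<in> H" "(0, b - a) \<in> H"
    using subspace_diff[OF H assms(2,3)] subspace_diff[OF H assms(3,2)] by simp_all
  then have "a - b \<le> 0" "b - a \<le> 0"
    using bound by fastforce+
  then show ?thesis by simp
qed

lemma norm_scaleR_inverse_add:
  fixes m y :: "'a::real_normed_vector"
  assumes "t > 0"
  shows "t * norm (inverse t *\<^sub>R m + y) = norm (m + t *\<^sub>R y)"
proof -
  have "t *\<^sub>R (inverse t *\<^sub>R m + y) = m + t *\<^sub>R y"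
    using assms by (simp add: scaleR_add_right)
  then show ?thesis
    using assms by (metis abs_of_pos norm_scaleR)
qed

lemma dominated_graph_extension_value:
  fixes H :: "('a::real_normed_vector \<times> real) set"
  assumes "dominated_graph C H" "C \<ge> 0"
  obtains c where "\<And>n b. (n, b) \<in> H \<Longrightarrow> b - C * norm (n - x0) \<le> c"
    and "\<And>m a. (m, a) \<in> H \<Longrightarrow> c \<le> C * norm (m + x0) - a"
proof -
  have sub: "subspace H" and bound: "\<And>x a. (x, a) \<in> H \<Longrightarrow> a \<le> C * norm x"
    using assms(1) unfolding dominated_graph_def by auto
  have gap: "b - C * norm (n - x0) \<le> C * norm (m + x0) - a" if "(n, b) \<in> H" "(m, a) \<in> H" for n b m a
  proof -
    have "a + b \<le> C * norm (m + n)"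
      using bound subspace_add[OF sub that(2,1)] by simp
    also have "\<dots> \<le> C * (norm (n - x0) + norm (m + x0))"
      using norm_triangle_ineq[of "n - x0" "m + x0"] \<open>C \<ge> 0\<close>
      by (intro mult_left_mono) (simp_all add: algebra_simps)
    finally show ?thesis by (simp add: algebra_simps)
  qed
  define L where "L = {b - C * norm (n - x0) | n b. (n, b) \<in> H}"
  have "(0, 0) \<in> H" using subspace_0[OF sub] by (simp add: zero_prod_def)
  then have "L \<noteq> {}" and "bdd_above L"
    unfolding L_def bdd_above_def using gap by fastforce+
  then show ?thesis
    using that[of "Sup L"] gap unfolding L_def by (auto intro!: cSup_upper cSup_least)
qed

lemma dominated_graph_extend_point:
  fixes H :: "('a::real_normed_vector \<times> real) set"
  assumes H: "dominated_graph C H" and "C \<ge> 0"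
  shows "\<exists>c. dominated_graph C (span (insert (x0, c) H))"
proof -
  have sub: "subspace H" and bound: "\<And>x a. (x, a) \<in> H \<Longrightarrow> a \<le> C * norm x"
    using H unfolding dominated_graph_def by auto
  obtain c where below: "\<And>n b. (n, b) \<in> H \<Longrightarrow> b - C * norm (n - x0) \<le> c"
    and above: "\<And>m a. (m, a) \<in> H \<Longrightarrow> c \<le> C * norm (m + x0) - a"
    using dominated_graph_extension_value[OF assms] by blast
  have "a \<le> C * norm x" if xa: "(x, a) \<in> span (insert (x0, c) H)" for x a
  proof -
    have "span H = H" using sub by simp
    then obtain t where "(x, a) - t *\<^sub>R (x0, c) \<in> H"
      using xa span_breakdown_eq by metis
    then have mH: "(x - t *\<^sub>R x0, a - t * c) \<in> H" by simp
    define m a1 where "m = x - t *\<^sub>R x0" and "a1 = a - t * c"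
    have x: "x = m + t *\<^sub>R x0" and a: "a = a1 + t * c"
      unfolding m_def a1_def by simp_all
    consider "t = 0" | "t > 0" | "t < 0" by linarith
    then show ?thesis
    proof cases
      case 1
      then show ?thesis using bound mH by simp
    next
      case 2
      have "c \<le> C * norm (inverse t *\<^sub>R m + x0) - inverse t * a1"
        using above subspace_scale[OF sub mH, of "inverse t"] by (simp add: m_def a1_def)
      then have "t * c \<le> C * (t * norm (inverse t *\<^sub>R m + x0)) - a1"
        using 2 by (simp add: field_simps)
      then show ?thesis
        unfolding norm_scaleR_inverse_add[OF 2] x a by simp
    next
      case 3
      define s where "s = - t"
      have "s > 0" using 3 by (simp add: s_def)
      have "inverse s * a1 - C * norm (inverse s *\<^sub>R m - x0) \<le> c"
        using below subspace_scale[OF sub mH, of "inverse s"] by (simp add: m_def a1_def)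
      then have "a1 - C * (s * norm (inverse s *\<^sub>R m + - x0)) \<le> s * c"
        using \<open>s > 0\<close> by (simp add: field_simps)
      moreover have "s * norm (inverse s *\<^sub>R m + - x0) = norm (m + t *\<^sub>R x0)"
        using norm_scaleR_inverse_add[OF \<open>s > 0\<close>, of m "- x0"] by (simp add: s_def)
      ultimately have "a1 - C * norm (m + t *\<^sub>R x0) \<le> s * c"
        by simp
      then show ?thesis
        unfolding x a s_def by simp
    qed
  qed
  then show ?thesis
    unfolding dominated_graph_def by blast
qed

lemma subspace_Union_chain:
  assumes "\<C> \<noteq> {}" "\<And>S. S \<in> \<C> \<Longrightarrow> subspace S"
    and "\<And>S T. S \<in> \<C> \<Longrightarrow> T \<in> \<C> \<Longrightarrow> S \<subseteq> T \<or> T \<subseteq> S"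
  shows "subspace (\<Union>\<C>)"
  unfolding subspace_def
proof (intro conjI ballI allI)
  show "0 \<in> \<Union>\<C>"
    using assms(1,2) subspace_0 by blast
  show "x + y \<in> \<Union>\<C>" if "x \<in> \<Union>\<C>" "y \<in> \<Union>\<C>" for x y
  proof -
    obtain S T where "S \<in> \<C>" "T \<in> \<C>" "x \<in> S" "y \<in> T"
      using \<open>x \<in> \<Union>\<C>\<close> \<open>y \<in> \<Union>\<C>\<close> by blast
    then show ?thesis
      using assms(3)[of S T] assms(2)[of S] assms(2)[of T] subspace_add by blast
  qed
  show "c *\<^sub>R x \<in> \<Union>\<C>" if "x \<in> \<Union>\<C>" for c x
    using that assms(2) subspace_scale by blast
qed

lemma dominated_graph_extend_total:
  fixes H0 :: "('a::real_normed_vector \<times> real) set"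
  assumes "dominated_graph C H0" "C \<ge> 0"
  obtains H where "dominated_graph C H" "H0 \<subseteq> H" "Domain H = UNIV"
proof -
  let ?A = "{H. dominated_graph C H \<and> H0 \<subseteq> H}"
  have "\<exists>M\<in>?A. \<forall>H\<in>?A. M \<subseteq> H \<longrightarrow> H = M"
  proof (rule subset_Zorn_nonempty)
    show "?A \<noteq> {}"
      using assms(1) by blast
    fix \<C> assume "\<C> \<noteq> {}" "subset.chain ?A \<C>"
    then have A: "\<C> \<subseteq> ?A" and chain: "\<And>S T. S \<in> \<C> \<Longrightarrow> T \<in> \<C> \<Longrightarrow> S \<subseteq> T \<or> T \<subseteq> S"
      unfolding subset_chain_def by blast+
    have "subspace (\<Union>\<C>)"
      using \<open>\<C> \<noteq> {}\<close> A chain unfolding dominated_graph_def by (intro subspace_Union_chain) auto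
    moreover have "a \<le> C * norm x" if "(x, a) \<in> \<Union>\<C>" for x a
      using that A unfolding dominated_graph_def by fastforce
    moreover have "H0 \<subseteq> \<Union>\<C>"
      using \<open>\<C> \<noteq> {}\<close> A by auto
    ultimately show "\<Union>\<C> \<in> ?A"
      unfolding dominated_graph_def by auto
  qed
  then obtain M where "M \<in> ?A" and maximal: "\<forall>H\<in>?A. M \<subseteq> H \<longrightarrow> H = M" ..
  then have M: "dominated_graph C M" "H0 \<subseteq> M"
    by simp_all
  have "x0 \<in> Domain M" for x0
  proof -
    obtain c where c: "dominated_graph C (span (insert (x0, c) M))"
      using dominated_graph_extend_point[OF M(1) assms(2)] by blast
    have "M \<subseteq> span (insert (x0, c) M)"
      using span_superset[of "insert (x0, c) M"] by blast
    then have "span (insert (x0, c) M) = M"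
      using maximal c M(2) by blast
    then show ?thesis
      using span_superset[of "insert (x0, c) M"] by blast
  qed
  then have "Domain M = UNIV"
    by blast
  then show ?thesis
    by (rule that[OF M])
qed

lemma hahn_banach_real:
  fixes H0 :: "('a::real_normed_vector \<times> real) set"
  assumes "dominated_graph C H0" "C \<ge> 0"
  obtains G where "bounded_linear G" "\<And>x a. (x, a) \<in> H0 \<Longrightarrow> G x = a"
    "\<And>x. \<bar>G x\<bar> \<le> C * norm x"
proof -
  obtain H where H: "dominated_graph C H" "H0 \<subseteq> H" "Domain H = UNIV"
    using dominated_graph_extend_total[OF assms] .
  have sub: "subspace H" and bound: "\<And>x a. (x, a) \<in> H \<Longrightarrow> a \<le> C * norm x"
    using H(1) unfolding dominated_graph_def by auto
  define G where "G x = (SOME a. (x, a) \<in> H)" for x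
  have graph: "(x, G x) \<in> H" for x
    unfolding G_def using H(3) by (metis DomainE UNIV_I someI)
  have G_eq: "G x = a" if "(x, a) \<in> H" for x a
    using dominated_graph_single_valued[OF H(1) graph that] .
  have add: "G (x + y) = G x + G y" for x y
    using G_eq subspace_add[OF sub graph graph] by simp
  have scale: "G (r *\<^sub>R x) = r * G x" for r x
    using G_eq subspace_scale[OF sub graph] by simp
  have abs_bound: "\<bar>G x\<bar> \<le> C * norm x" for x
    using bound[OF graph, of x] bound[OF graph, of "- x"] scale[of "- 1" x] by simp
  have "bounded_linear G"
    by (rule bounded_linear_intro[where K = C]) (use add scale abs_bound in \<open>auto simp: mult.commute\<close>)
  then show ?thesis
    using that G_eq H(2) abs_bound by blast
qed

lemma separating_functional_real:
  fixes S :: "'a::real_normed_vector set"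
  assumes "subspace S" "closed S" "p \<notin> S"
  obtains G :: "'a \<Rightarrow> real" where "bounded_linear G" "\<And>x. x \<in> S \<Longrightarrow> G x = 0" "G p = 1"
proof -
  define d where "d = infdist p S"
  have "d > 0"
    unfolding d_def using assms subspace_0 infdist_pos_not_in_closed by blast
  define H0 where "H0 = span (insert (p, 1 :: real) (S \<times> {0}))"
  have S0: "subspace (S \<times> {0 :: real})"
    using assms(1) unfolding subspace_def by (auto simp: zero_prod_def)
  have H0_iff: "(x, a) \<in> H0 \<longleftrightarrow> x - a *\<^sub>R p \<in> S" for x a
    using S0 unfolding H0_def span_breakdown_eq span_eq_iff[THEN iffD2, OF S0] by auto
  have dist_bound: "\<bar>a\<bar> * d \<le> norm x" if "x - a *\<^sub>R p \<in> S" for x a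
  proof (cases "a = 0")
    case False
    have "- inverse a *\<^sub>R (x - a *\<^sub>R p) \<in> S"
      using assms(1) that by (rule subspace_scale)
    then have "d \<le> dist p (- inverse a *\<^sub>R (x - a *\<^sub>R p))"
      unfolding d_def by (rule infdist_le)
    also have "\<dots> = norm (inverse a *\<^sub>R x)"
      using False by (simp add: dist_norm algebra_simps)
    finally show ?thesis
      using False by (simp add: field_simps)
  qed (simp add: \<open>d > 0\<close>)
  have "a \<le> inverse d * norm x" if "(x, a) \<in> H0" for x a
  proof -
    have "\<bar>a\<bar> \<le> inverse d * norm x"
      using dist_bound[of x a] that \<open>d > 0\<close> by (simp add: H0_iff field_simps)
    then show ?thesis by linarith
  qed
  then have "dominated_graph (inverse d) H0"
    unfolding dominated_graph_def H0_def by auto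
  moreover have "inverse d \<ge> 0"
    using \<open>d > 0\<close> by simp
  ultimately obtain G where "bounded_linear G" "\<And>x a. (x, a) \<in> H0 \<Longrightarrow> G x = a"
    by (rule hahn_banach_real) blast
  moreover have "(x, 0) \<in> H0" if "x \<in> S" for x
    using that by (simp add: H0_iff)
  moreover have "(p, 1) \<in> H0"
    using assms(1) by (simp add: H0_iff subspace_0)
  ultimately show ?thesis
    by (intro that[of G]) auto
qed

lemma norming_functional_real:
  fixes v :: "'a::real_normed_vector"
  obtains G where "bounded_linear G" "G v = norm v" "\<And>x. \<bar>G x\<bar> \<le> norm x"
proof -
  have "(x, a) \<in> span {(v, norm v)} \<Longrightarrow> a \<le> 1 * norm x" for x a
    by (auto simp: span_singleton mult_right_mono)
  then have "dominated_graph 1 (span {(v, norm v)})"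
    unfolding dominated_graph_def by auto
  then obtain G where "bounded_linear G" "\<And>x a. (x, a) \<in> span {(v, norm v)} \<Longrightarrow> G x = a"
    "\<And>x. \<bar>G x\<bar> \<le> 1 * norm x"
    using hahn_banach_real zero_le_one by blast
  then show ?thesis
    using that span_base[of "(v, norm v)"] by auto
qed

lemma subspace_closure:
  fixes S :: "'a::real_normed_vector set"
  assumes "subspace S"
  shows "subspace (closure S)"
  unfolding subspace_def
proof (intro conjI ballI allI)
  show "0 \<in> closure S"
    using assms subspace_0 closure_subset by blast
  show "x + y \<in> closure S" if xy: "x \<in> closure S" "y \<in> closure S" for x y
  proof -
    obtain a b where "\<forall>n. a n \<in> S" "a \<longlonglongrightarrow> x" "\<forall>n. b n \<in> S" "b \<longlonglongrightarrow> y"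
      using xy unfolding closure_sequential by blast
    then show ?thesis
      unfolding closure_sequential
      by (intro exI[of _ "\<lambda>n. a n + b n"]) (simp add: subspace_add[OF assms] tendsto_add)
  qed
  show "c *\<^sub>R x \<in> closure S" if x: "x \<in> closure S" for c x
  proof -
    obtain a where "\<forall>n. a n \<in> S" "a \<longlonglongrightarrow> x"
      using x unfolding closure_sequential by blast
    then show ?thesis
      unfolding closure_sequential
      by (intro exI[of _ "\<lambda>n. c *\<^sub>R a n"]) (simp add: subspace_scale[OF assms] tendsto_scaleR)
  qed
qed

lemma Cauchy_dominated:
  fixes f :: "nat \<Rightarrow> 'a::real_normed_vector" and g :: "nat \<Rightarrow> 'b::real_normed_vector"
  assumes "Cauchy f" "\<And>m n. norm (g m - g n) \<le> K * norm (f m - f n)"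
  shows "Cauchy g"
proof (rule CauchyI)
  fix e :: real
  assume "e > 0"
  then have "e / (\<bar>K\<bar> + 1) > 0"
    by simp
  then obtain M where M: "\<And>m n. m \<ge> M \<Longrightarrow> n \<ge> M \<Longrightarrow> norm (f m - f n) < e / (\<bar>K\<bar> + 1)"
    using CauchyD[OF assms(1)] by blast
  have "norm (g m - g n) < e" if "m \<ge> M" "n \<ge> M" for m n
  proof -
    have "norm (g m - g n) \<le> \<bar>K\<bar> * norm (f m - f n)"
      using assms(2)[of m n] mult_right_mono[OF abs_ge_self norm_ge_zero, of K "f m - f n"] by linarith
    also have "\<dots> \<le> \<bar>K\<bar> * (e / (\<bar>K\<bar> + 1))"
      using M[OF that] by (intro mult_left_mono) simp_all
    also have "\<dots> < e"
      using \<open>e > 0\<close> by (simp add: field_simps)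
    finally show ?thesis .
  qed
  then show "\<exists>M. \<forall>m\<ge>M. \<forall>n\<ge>M. norm (g m - g n) < e"
    by blast
qed

section \<open>Complex Banach spaces and operators on them\<close>

definition pair_scale :: "(complex \<Rightarrow> 'x \<Rightarrow> 'x) \<Rightarrow> complex \<Rightarrow> 'x \<times> 'x \<Rightarrow> 'x \<times> 'x" where
  "pair_scale sc c = map_prod (sc c) (sc c)"

definition op_apply :: "('x \<times> 'y) set \<Rightarrow> 'x \<Rightarrow> 'y" where
  "op_apply R x = (SOME y. (x, y) \<in> R)"

lemma adj_antimono: "R \<subseteq> S \<Longrightarrow> adj sc S \<subseteq> adj sc R"
  unfolding adj_def by blast

locale complex_banach =
  fixes sc :: "complex \<Rightarrow> 'x::banach \<Rightarrow> 'x"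
  assumes cbanach: "cbanach sc"
begin

sublocale cx: vector_space sc
  using cbanach unfolding cbanach_def by blast

lemma scale_of_real: "sc (complex_of_real r) x = r *\<^sub>R x"
  using cbanach unfolding cbanach_def by blast

lemma norm_scale: "norm (sc c x) = cmod c * norm x"
  using cbanach unfolding cbanach_def by blast

lemma subspace_if_cx_subspace: "cx.subspace S \<Longrightarrow> subspace S"
  unfolding cx.subspace_def subspace_def by (metis scale_of_real)

lemma
  assumes "\<phi> \<in> cdual sc"
  shows cdual_add: "\<phi> (x + y) = \<phi> x + \<phi> y"
    and cdual_scale: "\<phi> (sc c x) = c * \<phi> x"
  using assms unfolding cdual_def Vector_Spaces.linear_iff by auto

lemma cdual_zero: "\<phi> \<in> cdual sc \<Longrightarrow> \<phi> 0 = 0"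
  using cdual_add[of \<phi> 0 0] by simp

lemma cdualI:
  assumes "\<And>x y. \<phi> (x + y) = \<phi> x + \<phi> y" "\<And>c x. \<phi> (sc c x) = c * \<phi> x"
    and "\<And>x. cmod (\<phi> x) \<le> K * norm x"
  shows "\<phi> \<in> cdual sc"
  unfolding cdual_def Vector_Spaces.linear_iff
  using assms cx.vector_space_axioms vector_space_over_itself.vector_space_axioms by blast

lemma cdual_bounded_linear:
  assumes "\<phi> \<in> cdual sc"
  shows "bounded_linear \<phi>"
proof -
  obtain K where K: "\<And>x. cmod (\<phi> x) \<le> K * norm x"
    using assms unfolding cdual_def by blast
  show ?thesis
  proof (rule bounded_linear_intro[where K = K])
    show "\<phi> (r *\<^sub>R x) = r *\<^sub>R \<phi> x" for r x
      using cdual_scale[OF assms, of "complex_of_real r" x] by (simp add: scale_of_real scaleR_conv_of_real)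
  qed (use cdual_add[OF assms] K in \<open>auto simp: mult.commute\<close>)
qed

lemma cdual_const_zero: "(\<lambda>_. 0) \<in> cdual sc"
  by (rule cdualI[where K = 0]) auto

lemma cdual_plus:
  assumes "\<phi> \<in> cdual sc" "\<psi> \<in> cdual sc"
  shows "(\<lambda>x. \<phi> x + \<psi> x) \<in> cdual sc"
proof -
  obtain K L where K: "\<And>x. cmod (\<phi> x) \<le> K * norm x" and L: "\<And>x. cmod (\<psi> x) \<le> L * norm x"
    using assms unfolding cdual_def by blast
  have "cmod (\<phi> x + \<psi> x) \<le> (K + L) * norm x" for x
    using norm_triangle_ineq[of "\<phi> x" "\<psi> x"] K[of x] L[of x] by (simp add: distrib_right)
  then show ?thesis
    by (rule cdualI[rotated 2]) (simp_all add: cdual_add cdual_scale assms algebra_simps)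
qed

lemma cdual_mult:
  assumes "\<phi> \<in> cdual sc"
  shows "(\<lambda>x. c * \<phi> x) \<in> cdual sc"
proof -
  obtain K where "\<And>x. cmod (\<phi> x) \<le> K * norm x"
    using assms unfolding cdual_def by blast
  then have "cmod (c * \<phi> x) \<le> (cmod c * K) * norm x" for x
    by (simp add: norm_mult mult.assoc mult_left_mono)
  then show ?thesis
    by (rule cdualI[rotated 2]) (simp_all add: cdual_add cdual_scale assms algebra_simps)
qed

lemma dnorm_upper:
  assumes "\<phi> \<in> cdual sc" "norm x \<le> 1"
  shows "cmod (\<phi> x) \<le> dnorm \<phi>"
proof -
  obtain K where K: "\<And>x. cmod (\<phi> x) \<le> K * norm x"
    using assms(1) unfolding cdual_def by blast
  have "cmod (\<phi> y) \<le> \<bar>K\<bar>" if "norm y \<le> 1" for y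
  proof -
    have "K * norm y \<le> \<bar>K\<bar> * norm y" by (simp add: mult_right_mono)
    also have "\<dots> \<le> \<bar>K\<bar>" using that by (simp add: mult_left_le)
    finally show ?thesis using K[of y] by linarith
  qed
  then have "bdd_above {cmod (\<phi> y) | y. norm y \<le> 1}"
    by (intro bdd_aboveI[of _ "\<bar>K\<bar>"]) blast
  then show ?thesis
    unfolding dnorm_def using assms(2) by (intro cSup_upper) auto
qed

lemma dnorm_nonneg: "\<phi> \<in> cdual sc \<Longrightarrow> 0 \<le> dnorm \<phi>"
  using dnorm_upper[of \<phi> 0] cdual_zero[of \<phi>] by simp

lemma dnorm_bound:
  assumes "\<phi> \<in> cdual sc"
  shows "cmod (\<phi> x) \<le> dnorm \<phi> * norm x"
proof (cases "x = 0")
  case True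
  then show ?thesis by (simp add: cdual_zero[OF assms])
next
  case False
  have "\<phi> (inverse (norm x) *\<^sub>R x) = complex_of_real (inverse (norm x)) * \<phi> x"
    using cdual_scale[OF assms, of "complex_of_real (inverse (norm x))" x] by (simp only: scale_of_real)
  then have "cmod (\<phi> x) / norm x = cmod (\<phi> (inverse (norm x) *\<^sub>R x))"
    by (simp add: norm_mult norm_inverse divide_inverse_commute)
  also have "\<dots> \<le> dnorm \<phi>"
    using False by (intro dnorm_upper[OF assms]) simp
  finally show ?thesis
    using False by (simp add: field_simps)
qed

lemma dnorm_least: "(\<And>x. norm x \<le> 1 \<Longrightarrow> cmod (\<phi> x) \<le> M) \<Longrightarrow> dnorm \<phi> \<le> M"
  unfolding dnorm_def by (rule cSup_least) (auto intro: exI[of _ 0])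

definition complexify :: "('x \<Rightarrow> real) \<Rightarrow> 'x \<Rightarrow> complex" where
  "complexify G x = complex_of_real (G x) - \<i> * complex_of_real (G (sc \<i> x))"

lemma Re_complexify [simp]: "Re (complexify G x) = G x"
  by (simp add: complexify_def)

lemma scale_Re_Im: "sc c x = Re c *\<^sub>R x + Im c *\<^sub>R sc \<i> x"
proof -
  have "sc c x = sc (complex_of_real (Re c) + complex_of_real (Im c) * \<i>) x"
    by (rule arg_cong[where f = "\<lambda>c. sc c x"]) (simp add: complex_eq_iff)
  also have "\<dots> = sc (complex_of_real (Re c)) x + sc (complex_of_real (Im c)) (sc \<i> x)"
    by (simp only: cx.scale_left_distrib cx.scale_scale)
  finally show ?thesis
    by (simp only: scale_of_real)
qed

lemma complexify_scale:
  assumes "bounded_linear G"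
  shows "complexify G (sc c x) = c * complexify G x"
proof -
  interpret G: bounded_linear G by fact
  have "G (sc c x) = Re c * G x + Im c * G (sc \<i> x)"
    by (simp only: scale_Re_Im[of c x] G.add G.scaleR) simp
  moreover have "sc \<i> (sc c x) = Re c *\<^sub>R sc \<i> x + Im c *\<^sub>R sc \<i> (sc \<i> x)"
    by (simp only: cx.scale_left_commute[of \<i> c] scale_Re_Im[of c "sc \<i> x"])
  then have "G (sc \<i> (sc c x)) = Re c * G (sc \<i> x) - Im c * G x"
    by (simp add: G.diff G.scaleR)
  ultimately show ?thesis
    unfolding complexify_def by (simp add: complex_eq_iff algebra_simps)
qed

lemma norm_complexify_le:
  assumes "bounded_linear G" "\<And>x. \<bar>G x\<bar> \<le> K * norm x"
  shows "cmod (complexify G x) \<le> K * norm x"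
proof (cases "complexify G x = 0")
  case True
  then show ?thesis
    using assms(2)[of x] by simp
next
  case False
  define w where "w = complexify G x"
  \<comment> \<open>Rotating x by the phase u makes the value real, so it is the value of G.\<close>
  define u where "u = cnj w / complex_of_real (cmod w)"
  have "cmod u = 1"
    using False by (simp add: u_def w_def norm_divide)
  have "complexify G (sc u x) = u * w"
    using complexify_scale[OF assms(1)] by (simp add: w_def)
  also have "\<dots> = complex_of_real (cmod w)"
    using False by (simp add: u_def w_def field_simps complex_norm_square[symmetric] power2_eq_square)
  finally have "cmod w = G (sc u x)"
    using Re_complexify[of G "sc u x"] by simp
  also have "\<dots> \<le> K * norm x"
    using assms(2)[of "sc u x"] \<open>cmod u = 1\<close> by (simp add: norm_scale)
  finally show ?thesis
    by (simp add: w_def)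
qed

lemma complexify_in_cdual:
  assumes "bounded_linear G"
  shows "complexify G \<in> cdual sc"
proof -
  interpret G: bounded_linear G by fact
  obtain K where "\<And>x. \<bar>G x\<bar> \<le> K * norm x"
    using G.bounded by (metis mult.commute real_norm_def)
  then show ?thesis
    using complexify_scale[OF assms] norm_complexify_le[OF assms]
    by (intro cdualI[where K = K]) (auto simp: complexify_def cx.scale_right_distrib G.add algebra_simps)
qed

lemma cdual_separation:
  assumes "cx.subspace S" "p \<notin> closure S"
  obtains \<phi> where "\<phi> \<in> cdual sc" "\<And>x. x \<in> S \<Longrightarrow> \<phi> x = 0" "\<phi> p \<noteq> 0"
proof -
  have "subspace (closure S)"
    using assms(1) by (intro subspace_closure subspace_if_cx_subspace)
  then obtain G :: "'x \<Rightarrow> real"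
    where G: "bounded_linear G" "\<And>x. x \<in> closure S \<Longrightarrow> G x = 0" "G p = 1"
    using separating_functional_real assms(2) closed_closure by blast
  have "complexify G x = 0" if "x \<in> S" for x
    using G(2) closure_subset that cx.subspace_scale[OF assms(1) that, of \<i>]
    by (auto simp: complexify_def)
  moreover have "complexify G p \<noteq> 0"
  proof
    assume "complexify G p = 0"
    then have "G p = 0"
      using Re_complexify[of G p] by simp
    then show False
      using G(3) by simp
  qed
  ultimately show ?thesis
    using that complexify_in_cdual[OF G(1)] by blast
qed

lemma cdual_norming:
  obtains \<phi> where "\<phi> \<in> cdual sc" "dnorm \<phi> \<le> 1" "Re (\<phi> v) = norm v"
proof -
  obtain G where G: "bounded_linear G" "G v = norm v" "\<And>x. \<bar>G x\<bar> \<le> 1 * norm x"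
    using norming_functional_real[of v] by auto
  have "cmod (complexify G x) \<le> 1" if "norm x \<le> 1" for x
    using norm_complexify_le[OF G(1,3), of x] that by simp
  then have "dnorm (complexify G) \<le> 1"
    by (rule dnorm_least)
  then show ?thesis
    using that complexify_in_cdual[OF G(1)] G(2) by simp
qed

lemma complex_banach_pair_scale: "complex_banach (pair_scale sc)"
  unfolding complex_banach_def cbanach_def
proof (intro conjI allI)
  show "vector_space (pair_scale sc)"
    by unfold_locales (auto simp: pair_scale_def cx.scale_right_distrib cx.scale_left_distrib)
  show "pair_scale sc (complex_of_real r) z = r *\<^sub>R z" for r z
    by (cases z) (simp add: pair_scale_def scale_of_real)
  show "norm (pair_scale sc c z) = cmod c * norm z" for c z
    by (cases z) (simp add: pair_scale_def norm_Pair norm_scale power_mult_distrib real_sqrt_mult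
        flip: distrib_left)
qed

lemma lin_rel_iff_subspace: "lin_rel sc T \<longleftrightarrow> module.subspace (pair_scale sc) T"
proof -
  interpret pair: complex_banach "pair_scale sc"
    by (rule complex_banach_pair_scale)
  show ?thesis
    unfolding lin_rel_def pair.cx.subspace_def pair_scale_def by (force simp: zero_prod_def)
qed

lemma cdual_pair_scale_split:
  assumes "\<phi> \<in> cdual (pair_scale sc)"
  shows "(\<lambda>x. \<phi> (x, 0)) \<in> cdual sc" "(\<lambda>y. \<phi> (0, y)) \<in> cdual sc"
    and "\<phi> (x, y) = \<phi> (x, 0) + \<phi> (0, y)"
proof -
  interpret pair: complex_banach "pair_scale sc"
    by (rule complex_banach_pair_scale)
  obtain K where K: "\<And>z. cmod (\<phi> z) \<le> K * norm z"
    using assms unfolding cdual_def by blast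
  show "(\<lambda>x. \<phi> (x, 0)) \<in> cdual sc"
    using pair.cdual_add[OF assms, of "(_, 0)" "(_, 0)"] pair.cdual_scale[OF assms, of _ "(_, 0)"] K[of "(_, 0)"]
    by (intro cdualI[where K = K]) (auto simp: pair_scale_def norm_Pair)
  show "(\<lambda>y. \<phi> (0, y)) \<in> cdual sc"
    using pair.cdual_add[OF assms, of "(0, _)" "(0, _)"] pair.cdual_scale[OF assms, of _ "(0, _)"] K[of "(0, _)"]
    by (intro cdualI[where K = K]) (auto simp: pair_scale_def norm_Pair)
  show "\<phi> (x, y) = \<phi> (x, 0) + \<phi> (0, y)"
    using pair.cdual_add[OF assms, of "(x, 0)" "(0, y)"] by simp
qed

lemma closed_op_subspace: "closed_op sc T \<Longrightarrow> module.subspace (pair_scale sc) T"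
  unfolding closed_op_def lin_rel_iff_subspace by blast

lemma closed_op_single_valued:
  assumes "closed_op sc T" "(x, y) \<in> T" "(x, z) \<in> T"
  shows "y = z"
proof -
  interpret pair: complex_banach "pair_scale sc"
    by (rule complex_banach_pair_scale)
  have "(0, y - z) \<in> T"
    using pair.cx.subspace_diff[OF closed_op_subspace[OF assms(1)] assms(2,3)] by simp
  then show ?thesis
    using assms(1) unfolding closed_op_def by auto
qed

lemma Domain_subspace:
  assumes "module.subspace (pair_scale sc) T"
  shows "cx.subspace (Domain T)"
  using assms unfolding lin_rel_iff_subspace[symmetric] cx.subspace_def Domain_iff lin_rel_def by blast

lemma bounded_op_apply:
  assumes "bounded_op sc R"
  shows "(x, op_apply R x) \<in> R"
proof -
  obtain y where "(x, y) \<in> R"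
    using assms unfolding bounded_op_def by blast
  then show ?thesis
    unfolding op_apply_def by (rule someI)
qed

lemma bounded_op_apply_eq:
  assumes "bounded_op sc R" "(x, y) \<in> R"
  shows "op_apply R x = y"
  using assms bounded_op_apply closed_op_single_valued unfolding bounded_op_def by blast

lemma bounded_op_apply_bound:
  assumes "bounded_op sc R"
  obtains K where "K \<ge> 0" "\<And>x. norm (op_apply R x) \<le> K * norm x"
proof -
  obtain K where K: "\<And>x y. (x, y) \<in> R \<Longrightarrow> norm y \<le> K * norm x"
    using assms unfolding bounded_op_def by blast
  have "norm (op_apply R x) \<le> max K 0 * norm x" for x
    using K[OF bounded_op_apply[OF assms, of x]] mult_right_mono[of K "max K 0" "norm x"] by simp
  then show ?thesis
    using that[of "max K 0"] by simp
qed

lemma bounded_op_apply_linear: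
  assumes "bounded_op sc R"
  shows "op_apply R (x + y) = op_apply R x + op_apply R y"
    and "op_apply R (sc c x) = sc c (op_apply R x)"
proof -
  interpret pair: complex_banach "pair_scale sc"
    by (rule complex_banach_pair_scale)
  have T: "module.subspace (pair_scale sc) R"
    using assms unfolding bounded_op_def by (blast intro: closed_op_subspace)
  show "op_apply R (x + y) = op_apply R x + op_apply R y"
    using pair.cx.subspace_add[OF T bounded_op_apply[OF assms] bounded_op_apply[OF assms]]
    by (intro bounded_op_apply_eq[OF assms]) simp
  show "op_apply R (sc c x) = sc c (op_apply R x)"
    using pair.cx.subspace_scale[OF T bounded_op_apply[OF assms], of c]
    by (intro bounded_op_apply_eq[OF assms]) (simp add: pair_scale_def)
qed

lemma bounded_linear_op_apply:
  assumes "bounded_op sc R"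
  shows "bounded_linear (op_apply R)"
proof -
  obtain K where K: "\<And>x. norm (op_apply R x) \<le> K * norm x"
    using bounded_op_apply_bound[OF assms] by blast
  show ?thesis
  proof (rule bounded_linear_intro[where K = K])
    show "op_apply R (r *\<^sub>R x) = r *\<^sub>R op_apply R x" for r x
      using bounded_op_apply_linear(2)[OF assms, of "complex_of_real r" x] by (simp add: scale_of_real)
  qed (simp_all add: bounded_op_apply_linear(1)[OF assms] K mult.commute)
qed

lemma cdual_comp_bounded_op:
  assumes "\<phi> \<in> cdual sc" "bounded_op sc R"
  shows "(\<lambda>x. \<phi> (op_apply R x)) \<in> cdual sc"
proof -
  obtain K where K: "K \<ge> 0" "\<And>x. norm (op_apply R x) \<le> K * norm x"
    using bounded_op_apply_bound[OF assms(2)] by blast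
  have "cmod (\<phi> (op_apply R x)) \<le> (dnorm \<phi> * K) * norm x" for x
    using dnorm_bound[OF assms(1), of "op_apply R x"] mult_left_mono[OF K(2)[of x] dnorm_nonneg[OF assms(1)]]
    by (simp add: mult.assoc)
  then show ?thesis
    by (rule cdualI[rotated 2])
      (simp_all add: bounded_op_apply_linear[OF assms(2)] cdual_add[OF assms(1)] cdual_scale[OF assms(1)])
qed

lemma adj_bounded_op_iff:
  assumes "bounded_op sc R"
  shows "(x', y') \<in> adj sc R \<longleftrightarrow> x' \<in> cdual sc \<and> y' = (\<lambda>x. x' (op_apply R x))"
proof
  assume adj: "(x', y') \<in> adj sc R"
  then have "y' x = x' (op_apply R x)" for x
    using bounded_op_apply[OF assms, of x] unfolding adj_def by auto
  then show "x' \<in> cdual sc \<and> y' = (\<lambda>x. x' (op_apply R x))"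
    using adj unfolding adj_def by auto
next
  assume "x' \<in> cdual sc \<and> y' = (\<lambda>x. x' (op_apply R x))"
  then show "(x', y') \<in> adj sc R"
    using bounded_op_apply_eq[OF assms] cdual_comp_bounded_op[OF _ assms] unfolding adj_def by auto
qed

lemma adj_closure: "adj sc (closure R) = adj sc R"
proof
  show "adj sc (closure R) \<subseteq> adj sc R"
    by (rule adj_antimono[OF closure_subset])
  show "adj sc R \<subseteq> adj sc (closure R)"
  proof clarify
    fix x' y' assume adj: "(x', y') \<in> adj sc R"
    then have "continuous_on UNIV x'" "continuous_on UNIV y'"
      unfolding adj_def by (auto intro: linear_continuous_on cdual_bounded_linear)
    then have "closed {z. x' (snd z) = y' (fst z)}"
      by (intro closed_Collect_eq continuous_on_compose2[OF _ continuous_on_snd[OF continuous_on_id]]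
          continuous_on_compose2[OF _ continuous_on_fst[OF continuous_on_id]]) auto
    moreover have "R \<subseteq> {z. x' (snd z) = y' (fst z)}"
      using adj unfolding adj_def by auto
    ultimately have "closure R \<subseteq> {z. x' (snd z) = y' (fst z)}"
      by (rule closure_minimal[rotated])
    then show "(x', y') \<in> adj sc (closure R)"
      using adj unfolding adj_def by auto
  qed
qed

lemma bounded_dop_adj:
  assumes "bounded_op sc T"
  shows "bounded_dop sc (adj sc T)"
proof -
  note adj_iff = adj_bounded_op_iff[OF assms]
  obtain K where K: "K \<ge> 0" "\<And>x. norm (op_apply T x) \<le> K * norm x"
    using bounded_op_apply_bound[OF assms] by blast
  have "dnorm (\<lambda>x. x' (op_apply T x)) \<le> K * dnorm x'" if "x' \<in> cdual sc" for x'
  proof (rule dnorm_least)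
    fix x :: 'x
    assume "norm x \<le> 1"
    have "cmod (x' (op_apply T x)) \<le> dnorm x' * norm (op_apply T x)"
      by (rule dnorm_bound[OF that])
    also have "\<dots> \<le> dnorm x' * K"
      using K(2)[of x] mult_left_le[OF \<open>norm x \<le> 1\<close> K(1)] dnorm_nonneg[OF that]
      by (intro mult_left_mono) auto
    finally show "cmod (x' (op_apply T x)) \<le> K * dnorm x'"
      by (simp add: mult.commute)
  qed
  then show ?thesis
    unfolding bounded_dop_def
  proof (intro conjI)
    show "adj sc T \<subseteq> cdual sc \<times> cdual sc"
      unfolding adj_def by auto
  qed (auto simp: adj_iff Domain_iff cdual_plus cdual_mult)
qed

lemma norm_bound_if_bounded_dop_adj:
  assumes "bounded_dop sc (adj sc R)"
  obtains K where "K \<ge> 0" "\<And>u v. (u, v) \<in> R \<Longrightarrow> norm v \<le> K * norm u"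
proof -
  obtain K where K: "\<And>x' y'. (x', y') \<in> adj sc R \<Longrightarrow> dnorm y' \<le> K * dnorm x'"
    and dom: "Domain (adj sc R) = cdual sc"
    using assms unfolding bounded_dop_def by blast
  have "norm v \<le> max K 0 * norm u" if "(u, v) \<in> R" for u v
  proof -
    obtain \<phi> where \<phi>: "\<phi> \<in> cdual sc" "dnorm \<phi> \<le> 1" "Re (\<phi> v) = norm v"
      by (rule cdual_norming)
    then obtain \<psi> where \<psi>: "(\<phi>, \<psi>) \<in> adj sc R"
      using dom by blast
    then have "\<psi> \<in> cdual sc" "\<phi> v = \<psi> u"
      using that unfolding adj_def by auto
    have "K * dnorm \<phi> \<le> max K 0"
      using \<phi>(2) dnorm_nonneg[OF \<phi>(1)] mult_left_le[of "dnorm \<phi>" "max K 0"]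
        mult_right_mono[of K "max K 0" "dnorm \<phi>"] by simp
    then have "dnorm \<psi> \<le> max K 0"
      using K[OF \<psi>] by simp
    have "norm v \<le> cmod (\<phi> v)"
      using \<phi>(3) complex_Re_le_cmod by metis
    also have "\<dots> \<le> dnorm \<psi> * norm u"
      using dnorm_bound[OF \<open>\<psi> \<in> cdual sc\<close>] \<open>\<phi> v = \<psi> u\<close> by simp
    also have "\<dots> \<le> max K 0 * norm u"
      using \<open>dnorm \<psi> \<le> max K 0\<close> by (simp add: mult_right_mono)
    finally show ?thesis .
  qed
  then show ?thesis
    using that[of "max K 0"] by simp
qed

lemma closed_op_bound_extends:
  assumes T: "closed_op sc T" and D: "cx.subspace D" "D \<subseteq> Domain T" "closure D = UNIV"
    and bound: "\<And>u v. (u, v) \<in> T \<Longrightarrow> u \<in> D \<Longrightarrow> norm v \<le> K * norm u"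
  shows "\<exists>y. (x, y) \<in> T \<and> norm y \<le> K * norm x"
proof -
  interpret pair: complex_banach "pair_scale sc"
    by (rule complex_banach_pair_scale)
  obtain d where d: "\<And>n. d n \<in> D" "d \<longlonglongrightarrow> x"
    using D(3) closure_sequential[of x D] by blast
  define v where "v n = (SOME w. (d n, w) \<in> T)" for n
  have v: "(d n, v n) \<in> T" for n
  proof -
    have "\<exists>w. (d n, w) \<in> T"
      using D(2) d(1) by blast
    then show ?thesis
      unfolding v_def by (rule someI_ex)
  qed
  have "(d m - d n, v m - v n) \<in> T" for m n
    using pair.cx.subspace_diff[OF closed_op_subspace[OF T] v v] by simp
  then have "norm (v m - v n) \<le> K * norm (d m - d n)" for m n
    by (rule bound) (rule cx.subspace_diff[OF D(1) d(1) d(1)])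
  then have "Cauchy v"
    by (rule Cauchy_dominated[OF LIMSEQ_imp_Cauchy[OF d(2)]])
  then obtain y where y: "v \<longlonglongrightarrow> y"
    using Cauchy_convergent_iff convergent_def by blast
  have "closed T"
    using T unfolding closed_op_def by blast
  then have "(x, y) \<in> T"
    by (rule closed_sequentially[OF _ _ tendsto_Pair[OF d(2) y]]) (simp add: v)
  moreover have "norm y \<le> K * norm x"
    using bound[OF v d(1)]
    by (intro tendsto_le[OF trivial_limit_sequentially tendsto_mult_left[OF tendsto_norm[OF d(2)]]
        tendsto_norm[OF y]]) simp
  ultimately show ?thesis
    by blast
qed

lemma bounded_op_if_bounded_on_dense:
  assumes T: "closed_op sc T" and D: "cx.subspace D" "D \<subseteq> Domain T" "closure D = UNIV"
    and bound: "\<And>u v. (u, v) \<in> T \<Longrightarrow> u \<in> D \<Longrightarrow> norm v \<le> K * norm u"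
  shows "bounded_op sc T"
proof -
  note extend = closed_op_bound_extends[OF assms]
  have "Domain T = UNIV"
    using extend by (auto intro: DomainI)
  moreover have "norm y \<le> K * norm x" if "(x, y) \<in> T" for x y
    using extend[of x] closed_op_single_valued[OF T that] by auto
  ultimately show ?thesis
    unfolding bounded_op_def using T by blast
qed

lemma closure_restrict_bounded_op:
  assumes T: "bounded_op sc T" and "closure D = UNIV"
  shows "closure (T \<inter> D \<times> UNIV) = T"
proof
  have "closed T"
    using T unfolding bounded_op_def closed_op_def by blast
  then show "closure (T \<inter> D \<times> UNIV) \<subseteq> T"
    by (rule closure_minimal[rotated]) blast
  show "T \<subseteq> closure (T \<inter> D \<times> UNIV)"
  proof clarify
    fix x y assume "(x, y) \<in> T"
    obtain d where d: "\<And>n. d n \<in> D" "d \<longlonglongrightarrow> x"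
      using assms(2) closure_sequential[of x D] by blast
    have "(\<lambda>n. (d n, op_apply T (d n))) \<longlonglongrightarrow> (x, op_apply T x)"
      using bounded_linear.tendsto[OF bounded_linear_op_apply[OF T] d(2)] d(2) by (rule tendsto_Pair[rotated])
    moreover have "(d n, op_apply T (d n)) \<in> T \<inter> D \<times> UNIV" for n
      using bounded_op_apply[OF T] d(1) by blast
    ultimately show "(x, y) \<in> closure (T \<inter> D \<times> UNIV)"
      unfolding closure_sequential bounded_op_apply_eq[OF T \<open>(x, y) \<in> T\<close>]
      by (intro exI[of _ "\<lambda>n. (d n, op_apply T (d n))"]) blast
  qed
qed

lemma subspace_Domain_adj_kernel:
  assumes T: "closed_op sc T" and "x' \<in> cdual sc" "y' \<in> cdual sc"
  shows "cx.subspace (Domain (T \<inter> {z. x' (snd z) = y' (fst z)}))"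
proof -
  interpret pair: complex_banach "pair_scale sc"
    by (rule complex_banach_pair_scale)
  have "pair.cx.subspace {z. x' (snd z) = y' (fst z)}"
    using assms(2,3) unfolding pair.cx.subspace_def
    by (auto simp: pair_scale_def cdual_add cdual_scale cdual_zero zero_prod_def)
  then show ?thesis
    by (intro Domain_subspace pair.cx.subspace_inter closed_op_subspace[OF T])
qed

lemma adj_restrict_span:
  assumes T: "closed_op sc T" and G: "G \<subseteq> Domain T"
  shows "adj sc (T \<inter> cx.span G \<times> UNIV) = adj sc (T \<inter> G \<times> UNIV)"
proof
  show "adj sc (T \<inter> cx.span G \<times> UNIV) \<subseteq> adj sc (T \<inter> G \<times> UNIV)"
    using cx.span_superset by (intro adj_antimono) blast
  show "adj sc (T \<inter> G \<times> UNIV) \<subseteq> adj sc (T \<inter> cx.span G \<times> UNIV)"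
  proof clarify
    fix x' y' assume adj: "(x', y') \<in> adj sc (T \<inter> G \<times> UNIV)"
    then have cd: "x' \<in> cdual sc" "y' \<in> cdual sc"
      unfolding adj_def by auto
    define Q where "Q = T \<inter> {z. x' (snd z) = y' (fst z)}"
    have "G \<subseteq> Domain Q"
    proof
      fix u assume "u \<in> G"
      then obtain v where "(u, v) \<in> T"
        using G by blast
      moreover have "x' v = y' u"
        using adj \<open>u \<in> G\<close> calculation unfolding adj_def by blast
      ultimately show "u \<in> Domain Q"
        unfolding Q_def by auto
    qed
    then have span: "cx.span G \<subseteq> Domain Q"
      using subspace_Domain_adj_kernel[OF T cd] unfolding Q_def by (intro cx.span_minimal)
    show "(x', y') \<in> adj sc (T \<inter> cx.span G \<times> UNIV)"
      unfolding adj_def mem_Collect_eq prod.case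
    proof (intro conjI cd allI impI)
      fix u v assume uv: "(u, v) \<in> T \<inter> cx.span G \<times> UNIV"
      then obtain v' where "(u, v') \<in> Q"
        using span by blast
      then have "(u, v') \<in> T" "x' v' = y' u"
        unfolding Q_def by simp_all
      then show "x' v = y' u"
        using closed_op_single_valued[OF T] uv by blast
    qed
  qed
qed

lemma adj_separates_from_closure:
  assumes R: "module.subspace (pair_scale sc) R" and pq: "(p, q) \<notin> closure R"
  obtains x' y' where "(x', y') \<in> adj sc R" "x' q \<noteq> y' p"
proof -
  interpret pair: complex_banach "pair_scale sc"
    by (rule complex_banach_pair_scale)
  obtain \<phi> where \<phi>: "\<phi> \<in> cdual (pair_scale sc)" "\<And>z. z \<in> R \<Longrightarrow> \<phi> z = 0" "\<phi> (p, q) \<noteq> 0"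
    using pair.cdual_separation[OF R pq] by blast
  note split = cdual_pair_scale_split[OF \<phi>(1)]
  have "(\<lambda>x. - \<phi> (x, 0)) \<in> cdual sc"
    using cdual_mult[OF split(1), of "- 1"] by simp
  moreover have "\<phi> (0, v) = - \<phi> (u, 0)" if "(u, v) \<in> R" for u v
    using \<phi>(2)[OF that] split(3)[of u v] by (simp add: add_eq_0_iff)
  ultimately have "((\<lambda>y. \<phi> (0, y)), (\<lambda>x. - \<phi> (x, 0))) \<in> adj sc R"
    unfolding adj_def using split(2) by blast
  moreover have "\<phi> (0, q) \<noteq> - \<phi> (p, 0)"
    using \<phi>(3) split(3)[of p q] by (simp add: add_eq_0_iff)
  ultimately show ?thesis
    using that by blast
qed

lemma adj_restrict_eq_iff_closure:
  assumes T: "closed_op sc T" and D: "cx.subspace D"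
  shows "adj sc T = adj sc (T \<inter> D \<times> UNIV) \<longleftrightarrow> closure (T \<inter> D \<times> UNIV) = T"
proof
  assume "closure (T \<inter> D \<times> UNIV) = T"
  then show "adj sc T = adj sc (T \<inter> D \<times> UNIV)"
    using adj_closure[of "T \<inter> D \<times> UNIV"] by simp
next
  interpret pair: complex_banach "pair_scale sc"
    by (rule complex_banach_pair_scale)
  assume adj_eq: "adj sc T = adj sc (T \<inter> D \<times> UNIV)"
  have "pair.cx.subspace (D \<times> UNIV)"
    using D unfolding pair.cx.subspace_def cx.subspace_def by (auto simp: pair_scale_def zero_prod_def)
  then have TD: "pair.cx.subspace (T \<inter> D \<times> UNIV)"
    by (intro pair.cx.subspace_inter closed_op_subspace[OF T])
  have "closed T"
    using T unfolding closed_op_def by blast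
  then have "closure (T \<inter> D \<times> UNIV) \<subseteq> T"
    by (rule closure_minimal[rotated]) blast
  moreover have "(p, q) \<in> closure (T \<inter> D \<times> UNIV)" if pq: "(p, q) \<in> T" for p q
  proof (rule ccontr)
    assume "(p, q) \<notin> closure (T \<inter> D \<times> UNIV)"
    then obtain x' y' where xy: "(x', y') \<in> adj sc (T \<inter> D \<times> UNIV)" "x' q \<noteq> y' p"
      by (rule adj_separates_from_closure[OF TD])
    then have "(x', y') \<in> adj sc T"
      using adj_eq by simp
    then show False
      using pq xy(2) unfolding adj_def by auto
  qed
  ultimately show "closure (T \<inter> D \<times> UNIV) = T"
    by auto
qed

end

section \<open>The dual calculus\<close>

locale banach_proto_calculus = complex_banach sc for sc :: "complex \<Rightarrow> 'x::banach \<Rightarrow> 'x" +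
  fixes smF :: "complex \<Rightarrow> 'f::ring_1 \<Rightarrow> 'f" and \<Phi> :: "'f \<Rightarrow> ('x \<times> 'x) set"
  assumes proto_calculus: "proto_calculus sc smF \<Phi>"
begin

lemma closed_op_calculus: "closed_op sc (\<Phi> g)"
  using proto_calculus by (simp add: proto_calculus_def)

lemma one_in_bdd_set: "1 \<in> bdd_set sc \<Phi>"
proof -
  have "\<Phi> 1 = Id"
    using proto_calculus by (simp add: proto_calculus_def)
  then show ?thesis
    using closed_op_calculus[of 1] unfolding bdd_set_def bounded_op_def by (auto intro!: exI[of _ 1])
qed

lemma apply_pair_mem_graph:
  assumes e: "e \<in> bdd_set sc \<Phi>" "f * e \<in> bdd_set sc \<Phi>"
  shows "(op_apply (\<Phi> e) x, op_apply (\<Phi> (f * e)) x) \<in> \<Phi> f"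
proof -
  have bop: "bounded_op sc (\<Phi> e)" "bounded_op sc (\<Phi> (f * e))"
    using e unfolding bdd_set_def by auto
  have "Domain (\<Phi> e O \<Phi> f) = Domain (\<Phi> e) \<inter> Domain (\<Phi> (f * e))"
    and comp: "\<Phi> e O \<Phi> f \<subseteq> \<Phi> (f * e)"
    using proto_calculus by (simp_all add: proto_calculus_def op_mult_def)
  then have "x \<in> Domain (\<Phi> e O \<Phi> f)"
    using bop unfolding bounded_op_def by blast
  then obtain u w where uw: "(x, u) \<in> \<Phi> e" "(u, w) \<in> \<Phi> f"
    by blast
  have "op_apply (\<Phi> e) x = u"
    using bounded_op_apply_eq[OF bop(1) uw(1)] .
  moreover have "op_apply (\<Phi> (f * e)) x = w"
    using bounded_op_apply_eq[OF bop(2)] comp uw by blast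
  ultimately show ?thesis
    using uw(2) by simp
qed

definition dset_generators :: "'f \<Rightarrow> 'x set" where
  "dset_generators f = {y. \<exists>x e. e \<in> bdd_set sc \<Phi> \<and> f * e \<in> bdd_set sc \<Phi> \<and> (x, y) \<in> \<Phi> e}"

lemma Dset_eq_span: "Dset sc \<Phi> f = cx.span (dset_generators f)"
  unfolding Dset_def cspan_def dset_generators_def ..

lemma restrict_generators_iff:
  "(u, v) \<in> \<Phi> f \<inter> dset_generators f \<times> UNIV \<longleftrightarrow>
    (\<exists>e x. e \<in> bdd_set sc \<Phi> \<and> f * e \<in> bdd_set sc \<Phi>
      \<and> u = op_apply (\<Phi> e) x \<and> v = op_apply (\<Phi> (f * e)) x)"
proof
  assume uv: "(u, v) \<in> \<Phi> f \<inter> dset_generators f \<times> UNIV"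
  then obtain e x where e: "e \<in> bdd_set sc \<Phi>" "f * e \<in> bdd_set sc \<Phi>" "(x, u) \<in> \<Phi> e"
    unfolding dset_generators_def by blast
  then have u: "u = op_apply (\<Phi> e) x"
    using bounded_op_apply_eq unfolding bdd_set_def by auto
  then have "v = op_apply (\<Phi> (f * e)) x"
    using closed_op_single_valued[OF closed_op_calculus[of f]] uv apply_pair_mem_graph[OF e(1,2), of x]
    by blast
  then show "\<exists>e x. e \<in> bdd_set sc \<Phi> \<and> f * e \<in> bdd_set sc \<Phi>
      \<and> u = op_apply (\<Phi> e) x \<and> v = op_apply (\<Phi> (f * e)) x"
    using e(1,2) u by blast
next
  assume "\<exists>e x. e \<in> bdd_set sc \<Phi> \<and> f * e \<in> bdd_set sc \<Phi>
      \<and> u = op_apply (\<Phi> e) x \<and> v = op_apply (\<Phi> (f * e)) x"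
  then obtain e x where e: "e \<in> bdd_set sc \<Phi>" "f * e \<in> bdd_set sc \<Phi>"
    and uv: "u = op_apply (\<Phi> e) x" "v = op_apply (\<Phi> (f * e)) x"
    by blast
  have "(x, u) \<in> \<Phi> e"
    using bounded_op_apply e(1) uv(1) unfolding bdd_set_def by blast
  then show "(u, v) \<in> \<Phi> f \<inter> dset_generators f \<times> UNIV"
    using apply_pair_mem_graph[OF e] e uv unfolding dset_generators_def by blast
qed

lemma generators_subset_Domain: "dset_generators f \<subseteq> Domain (\<Phi> f)"
proof
  fix u assume "u \<in> dset_generators f"
  then obtain e x where e: "e \<in> bdd_set sc \<Phi>" "f * e \<in> bdd_set sc \<Phi>" "(x, u) \<in> \<Phi> e"
    unfolding dset_generators_def by blast
  then have "u = op_apply (\<Phi> e) x"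
    using bounded_op_apply_eq unfolding bdd_set_def by auto
  then show "u \<in> Domain (\<Phi> f)"
    using apply_pair_mem_graph[OF e(1,2), of x] by blast
qed

lemma Dset_subspace: "cx.subspace (Dset sc \<Phi> f)"
  unfolding Dset_eq_span by simp

lemma Dset_subset_Domain: "Dset sc \<Phi> f \<subseteq> Domain (\<Phi> f)"
  unfolding Dset_eq_span
  by (intro cx.span_minimal generators_subset_Domain Domain_subspace closed_op_subspace closed_op_calculus)

lemma dual_op_iff:
  "(x', y') \<in> dual_op sc \<Phi> f \<longleftrightarrow> x' \<in> cdual sc \<and> y' \<in> cdual sc \<and>
    (\<forall>e x. e \<in> bdd_set sc \<Phi> \<longrightarrow> f * e \<in> bdd_set sc \<Phi> \<longrightarrow>
      x' (op_apply (\<Phi> (f * e)) x) = y' (op_apply (\<Phi> e) x))"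
proof -
  have "(\<exists>z. (x', z) \<in> adj sc (\<Phi> (f * e)) \<and> (y', z) \<in> adj sc (\<Phi> e)) \<longleftrightarrow>
      x' \<in> cdual sc \<and> y' \<in> cdual sc \<and> (\<forall>x. x' (op_apply (\<Phi> (f * e)) x) = y' (op_apply (\<Phi> e) x))"
    if "e \<in> bdd_set sc \<Phi>" "f * e \<in> bdd_set sc \<Phi>" for e
  proof -
    have bop: "bounded_op sc (\<Phi> e)" "bounded_op sc (\<Phi> (f * e))"
      using that unfolding bdd_set_def by auto
    note adj_iff = adj_bounded_op_iff[OF bop(1)] adj_bounded_op_iff[OF bop(2)]
    show ?thesis
    proof
      assume "\<exists>z. (x', z) \<in> adj sc (\<Phi> (f * e)) \<and> (y', z) \<in> adj sc (\<Phi> e)"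
      then obtain z where "(x', z) \<in> adj sc (\<Phi> (f * e))" "(y', z) \<in> adj sc (\<Phi> e)"
        by blast
      then show "x' \<in> cdual sc \<and> y' \<in> cdual sc \<and> (\<forall>x. x' (op_apply (\<Phi> (f * e)) x) = y' (op_apply (\<Phi> e) x))"
        unfolding adj_iff by (simp add: fun_eq_iff)
    next
      assume "x' \<in> cdual sc \<and> y' \<in> cdual sc \<and> (\<forall>x. x' (op_apply (\<Phi> (f * e)) x) = y' (op_apply (\<Phi> e) x))"
      then show "\<exists>z. (x', z) \<in> adj sc (\<Phi> (f * e)) \<and> (y', z) \<in> adj sc (\<Phi> e)"
        unfolding adj_iff by (intro exI[of _ "\<lambda>x. y' (op_apply (\<Phi> e) x)"]) auto
    qed
  qed
  then show ?thesis
    unfolding dual_op_def mem_Collect_eq prod.case by blast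
qed

lemma dual_op_eq_adj_generators: "dual_op sc \<Phi> f = adj sc (\<Phi> f \<inter> dset_generators f \<times> UNIV)"
proof (rule set_eqI)
  fix z :: "('x \<Rightarrow> complex) \<times> ('x \<Rightarrow> complex)"
  obtain x' y' where z: "z = (x', y')"
    by fastforce
  have "(\<forall>u v. (u, v) \<in> \<Phi> f \<inter> dset_generators f \<times> UNIV \<longrightarrow> x' v = y' u) \<longleftrightarrow>
      (\<forall>e x. e \<in> bdd_set sc \<Phi> \<longrightarrow> f * e \<in> bdd_set sc \<Phi> \<longrightarrow>
        x' (op_apply (\<Phi> (f * e)) x) = y' (op_apply (\<Phi> e) x))"
    unfolding restrict_generators_iff by blast
  then show "z \<in> dual_op sc \<Phi> f \<longleftrightarrow> z \<in> adj sc (\<Phi> f \<inter> dset_generators f \<times> UNIV)"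
    unfolding z dual_op_iff adj_def mem_Collect_eq prod.case by blast
qed

lemma dual_op_eq_adj_restrict: "dual_op sc \<Phi> f = adj sc (\<Phi> f \<inter> Dset sc \<Phi> f \<times> UNIV)"
  unfolding Dset_eq_span dual_op_eq_adj_generators
  using adj_restrict_span[OF closed_op_calculus generators_subset_Domain] by simp

lemma Dset_dense:
  assumes "f \<in> dual_dom sc \<Phi>"
  shows "closure (Dset sc \<Phi> f) = UNIV"
proof (rule ccontr)
  assume "closure (Dset sc \<Phi> f) \<noteq> UNIV"
  then obtain p where "p \<notin> closure (Dset sc \<Phi> f)"
    by blast
  then obtain \<phi> where \<phi>: "\<phi> \<in> cdual sc" "\<And>x. x \<in> Dset sc \<Phi> f \<Longrightarrow> \<phi> x = 0" "\<phi> p \<noteq> 0"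
    using cdual_separation[OF Dset_subspace] by blast
  have "dset_generators f \<subseteq> Dset sc \<Phi> f"
    unfolding Dset_eq_span by (rule cx.span_superset)
  then have "(\<phi>, \<lambda>_. 0) \<in> adj sc (\<Phi> e)" if "e \<in> bdd_set sc \<Phi>" "f * e \<in> bdd_set sc \<Phi>" for e
    unfolding adj_def using that \<phi>(1,2) cdual_const_zero unfolding dset_generators_def by blast
  moreover have "\<forall>x' \<in> cdual sc. (\<forall>e \<in> bdd_set sc \<Phi>. f * 1 * e \<in> bdd_set sc \<Phi> \<longrightarrow>
      (x', \<lambda>_. 0) \<in> adj sc (\<Phi> e)) \<longrightarrow> x' = (\<lambda>_. 0)"
    using assms one_in_bdd_set unfolding dual_dom_def by blast
  ultimately have "\<phi> = (\<lambda>_. 0)"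
    using \<phi>(1) by simp
  then show False
    using \<phi>(3) by simp
qed

lemma adj_subset_dual_op: "adj sc (\<Phi> f) \<subseteq> dual_op sc \<Phi> f"
  unfolding dual_op_eq_adj_restrict by (rule adj_antimono) blast

lemma adj_eq_dual_op_iff_core: "adj sc (\<Phi> f) = dual_op sc \<Phi> f \<longleftrightarrow> is_core (Dset sc \<Phi> f) (\<Phi> f)"
  unfolding is_core_def dual_op_eq_adj_restrict
  using adj_restrict_eq_iff_closure[OF closed_op_calculus Dset_subspace] Dset_subset_Domain by simp

lemma dual_op_eq_adj_if_bounded:
  assumes "f \<in> dual_dom sc \<Phi>" "bounded_op sc (\<Phi> f)"
  shows "dual_op sc \<Phi> f = adj sc (\<Phi> f)"
proof -
  have "adj sc (\<Phi> f) = dual_op sc \<Phi> f"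
    unfolding adj_eq_dual_op_iff_core is_core_def
    using closure_restrict_bounded_op[OF assms(2) Dset_dense[OF assms(1)]] Dset_subset_Domain by simp
  then show ?thesis
    by (rule sym)
qed

lemma bounded_op_iff_bounded_dop:
  assumes "f \<in> dual_dom sc \<Phi>"
  shows "bounded_op sc (\<Phi> f) \<longleftrightarrow> bounded_dop sc (dual_op sc \<Phi> f)"
proof
  assume "bounded_op sc (\<Phi> f)"
  then show "bounded_dop sc (dual_op sc \<Phi> f)"
    using bounded_dop_adj dual_op_eq_adj_if_bounded[OF assms] by simp
next
  assume "bounded_dop sc (dual_op sc \<Phi> f)"
  then obtain K where "K \<ge> 0"
    and bound: "\<And>u v. (u, v) \<in> \<Phi> f \<inter> Dset sc \<Phi> f \<times> UNIV \<Longrightarrow> norm v \<le> K * norm u"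
    unfolding dual_op_eq_adj_restrict by (rule norm_bound_if_bounded_dop_adj) blast
  show "bounded_op sc (\<Phi> f)"
    by (rule bounded_op_if_bounded_on_dense[OF closed_op_calculus Dset_subspace Dset_subset_Domain
          Dset_dense[OF assms]]) (use bound in blast)
qed

end

theorem theorem8p1:
  fixes sc :: "complex \<Rightarrow> 'x::banach \<Rightarrow> 'x"
    and smF :: "complex \<Rightarrow> 'f::ring_1 \<Rightarrow> 'f"
    and \<Phi> :: "'f \<Rightarrow> ('x \<times> 'x) set"
    and f :: 'f
  assumes "cbanach sc"
    and "calgebra smF"
    and "proto_calculus sc smF \<Phi>"
    and "dual_calculus sc smF \<Phi>"
    and "f \<in> dual_dom sc \<Phi>"
  shows "closure (Dset sc \<Phi> f) = UNIV \<and> Dset sc \<Phi> f \<subseteq> Domain (\<Phi> f)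
    \<and> adj sc (\<Phi> f) \<subseteq> dual_op sc \<Phi> f
         \<and> (adj sc (\<Phi> f) = dual_op sc \<Phi> f \<longleftrightarrow> is_core (Dset sc \<Phi> f) (\<Phi> f))
    \<and> (bounded_op sc (\<Phi> f) \<longleftrightarrow> bounded_dop sc (dual_op sc \<Phi> f))
         \<and> (bounded_op sc (\<Phi> f) \<longrightarrow> dual_op sc \<Phi> f = adj sc (\<Phi> f))"
proof -
  interpret banach_proto_calculus sc smF \<Phi>
    using assms(1,3) by unfold_locales
  show ?thesis
    by (intro conjI impI Dset_dense[OF assms(5)] Dset_subset_Domain adj_subset_dual_op
        adj_eq_dual_op_iff_core bounded_op_iff_bounded_dop[OF assms(5)] dual_op_eq_adj_if_bounded[OF assms(5)])
qed

end
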